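(* Let $(\mathcal{C},\mathbb{E},\mathfrak{s})$ be an extriangulated category and let $\varphi_\bullet=(\varphi_1,\varphi_2,\varphi_3)$ be a morphism of $\mathfrak{s}$-triangles from $X_\bullet=(X_1\xrightarrow{f_1}X_2\xrightarrow{f_2}X_3\overset{\delta}{\dashrightarrow})$ to $Y_\bullet=(Y_1\xrightarrow{g_1}Y_2\xrightarrow{g_2}Y_3\overset{\delta'}{\dashrightarrow})$. Then: (1) The following are equivalent: (a) $\underline{\varphi_\bullet}=0$ in $\mathfrak{s}\textup{-tri}(\mathcal{C})/\mathcal{R}_2$; (b) $\varphi_1$ factors through $f_1$; (c) $\varphi_3$ factors through $g_2$. (2) $\underline{\varphi_\bullet}$ is a monomorphism in $\mathfrak{s}\textup{-tri}(\mathcal{C})/\mathcal{R}_2$ if and only if $\begin{pmatrix} f_1\\ \varphi_1\end{pmatrix}:X_1\to X_2\oplus Y_1$ is a section (split monomorphism).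
   Context: An extriangulated category $(\mathcal{C},\mathbb{E},\mathfrak{s})$ (Nakaoka–Palu) is an additive category with an additive bifunctor $\mathbb{E}:\mathcal{C}^{\mathrm{op}}\times\mathcal{C}\to Ab$ and a realization $\mathfrak{s}$ assigning to each $\delta\in\mathbb{E}(C,A)$ an equivalence class of sequences $A\to B\to C$, giving $\mathfrak{s}$-triangles $A\to B\to C\overset{\delta}{\dashrightarrow}$, satisfying axioms (ET1)–(ET4)$^{\mathrm{op}}$. $\mathfrak{s}\textup{-tri}(\mathcal{C})$ is the category whose objects are $\mathfrak{s}$-triangles and whose morphisms $X_\bullet\to Y_\bullet$ (notation as in the claim) are triples $(\varphi_1,\varphi_2,\varphi_3)$ with $\varphi_2f_1=g_1\varphi_1$, $\varphi_3f_2=g_2\varphi_2$ and $\varphi_{1*}\delta=\varphi_3^*\delta'$, where $a_*\delta=\mathbb{E}(X_3,a)(\delta)$ and $c^*\delta'=\mathbb{E}(c,Y_1)(\delta')$ (morphisms of $\mathfrak{s}$-triangles). $\mathcal{R}_2(X_\bullet,Y_\bullet)$ is the set of morphisms $\varphi_\bullet$ such that $\varphi_3$ factors through $g_2$; it is an ideal of $\mathfrak{s}\textup{-tri}(\mathcal{C})$, and $\underline{\varphi_\bullet}$ denotes the image in the quotient $\mathfrak{s}\textup{-tri}(\mathcal{C})/\mathcal{R}_2$. *)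

theory Defs
  imports Main
begin

section \<open>Extriangulated categories (Nakaoka--Palu), encoded concretely\<close>

text \<open>
  A (small or large) category is given by a carrier of objects ob, hom-sets hom A B,
  composition cp g f (meaning g after f) and identities ide.  The bifunctor E is given by the sets ext C A
  (= E(C,A)), with abelian group structure ead / eng / ezr C A, push-forward
  push a d (= a_* d) and pull-back pull c d (= c^* d).  The realization is encoded by
  the predicate rl A B C f g d, meaning that  A --f--> B --g--> C ..d..>  is an
  s-triangle, i.e. the sequence (f,g) belongs to the class s(d).
\<close>

record ('o, 'm, 'e) extri =
  ob   :: "'o set"
  hom  :: "'o \<Rightarrow> 'o \<Rightarrow> 'm set"
  cp   :: "'m \<Rightarrow> 'm \<Rightarrow> 'm"
  ide  :: "'o \<Rightarrow> 'm"
  ad   :: "'m \<Rightarrow> 'm \<Rightarrow> 'm"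
  ng   :: "'m \<Rightarrow> 'm"
  zr   :: "'o \<Rightarrow> 'o \<Rightarrow> 'm"
  ext  :: "'o \<Rightarrow> 'o \<Rightarrow> 'e set"
  ead  :: "'e \<Rightarrow> 'e \<Rightarrow> 'e"
  eng  :: "'e \<Rightarrow> 'e"
  ezr  :: "'o \<Rightarrow> 'o \<Rightarrow> 'e"
  push :: "'m \<Rightarrow> 'e \<Rightarrow> 'e"
  pull :: "'m \<Rightarrow> 'e \<Rightarrow> 'e"
  rl   :: "'o \<Rightarrow> 'o \<Rightarrow> 'o \<Rightarrow> 'm \<Rightarrow> 'm \<Rightarrow> 'e \<Rightarrow> bool"

definition is_category :: "('o,'m,'e,'x) extri_scheme \<Rightarrow> bool" where
  "is_category X \<longleftrightarrow>
     (\<forall>A\<in>ob X. ide X A \<in> hom X A A) \<and>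
     (\<forall>A\<in>ob X. \<forall>B\<in>ob X. \<forall>D\<in>ob X. \<forall>f\<in>hom X A B. \<forall>g\<in>hom X B D. cp X g f \<in> hom X A D) \<and>
     (\<forall>A\<in>ob X. \<forall>B\<in>ob X. \<forall>f\<in>hom X A B. cp X f (ide X A) = f \<and> cp X (ide X B) f = f) \<and>
     (\<forall>A\<in>ob X. \<forall>B\<in>ob X. \<forall>D\<in>ob X. \<forall>E\<in>ob X. \<forall>f\<in>hom X A B. \<forall>g\<in>hom X B D. \<forall>h\<in>hom X D E.
        cp X h (cp X g f) = cp X (cp X h g) f)"

definition is_abgroup_on :: "'a set \<Rightarrow> ('a \<Rightarrow> 'a \<Rightarrow> 'a) \<Rightarrow> ('a \<Rightarrow> 'a) \<Rightarrow> 'a \<Rightarrow> bool" where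
  "is_abgroup_on S p n z \<longleftrightarrow>
     z \<in> S \<and> (\<forall>x\<in>S. \<forall>y\<in>S. p x y \<in> S) \<and> (\<forall>x\<in>S. n x \<in> S) \<and>
     (\<forall>x\<in>S. \<forall>y\<in>S. \<forall>w\<in>S. p (p x y) w = p x (p y w)) \<and>
     (\<forall>x\<in>S. \<forall>y\<in>S. p x y = p y x) \<and>
     (\<forall>x\<in>S. p x z = x) \<and> (\<forall>x\<in>S. p x (n x) = z)"

definition is_iso :: "('o,'m,'e,'x) extri_scheme \<Rightarrow> 'o \<Rightarrow> 'o \<Rightarrow> 'm \<Rightarrow> bool" where
  "is_iso X A B f \<longleftrightarrow> f \<in> hom X A B \<and>
     (\<exists>g\<in>hom X B A. cp X g f = ide X A \<and> cp X f g = ide X B)"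

definition biprod :: "('o,'m,'e,'x) extri_scheme \<Rightarrow> 'o \<Rightarrow> 'o \<Rightarrow> 'o \<Rightarrow> 'm \<Rightarrow> 'm \<Rightarrow> 'm \<Rightarrow> 'm \<Rightarrow> bool" where
  "biprod X A B P i1 i2 p1 p2 \<longleftrightarrow>
     P \<in> ob X \<and> i1 \<in> hom X A P \<and> i2 \<in> hom X B P \<and> p1 \<in> hom X P A \<and> p2 \<in> hom X P B \<and>
     cp X p1 i1 = ide X A \<and> cp X p2 i2 = ide X B \<and>
     cp X p1 i2 = zr X B A \<and> cp X p2 i1 = zr X A B \<and>
     ad X (cp X i1 p1) (cp X i2 p2) = ide X P"

definition is_additive :: "('o,'m,'e,'x) extri_scheme \<Rightarrow> bool" where
  "is_additive X \<longleftrightarrow> is_category X \<and>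
     (\<forall>A\<in>ob X. \<forall>B\<in>ob X. is_abgroup_on (hom X A B) (ad X) (ng X) (zr X A B)) \<and>
     (\<forall>A\<in>ob X. \<forall>B\<in>ob X. \<forall>D\<in>ob X. \<forall>f\<in>hom X A B. \<forall>f'\<in>hom X A B. \<forall>g\<in>hom X B D. \<forall>g'\<in>hom X B D.
        cp X g (ad X f f') = ad X (cp X g f) (cp X g f') \<and>
        cp X (ad X g g') f = ad X (cp X g f) (cp X g' f)) \<and>
     (\<exists>Z\<in>ob X. \<forall>A\<in>ob X. hom X A Z = {zr X A Z} \<and> hom X Z A = {zr X Z A}) \<and>
     (\<forall>A\<in>ob X. \<forall>B\<in>ob X. \<exists>P i1 i2 p1 p2. biprod X A B P i1 i2 p1 p2)"

definition ET1 :: "('o,'m,'e,'x) extri_scheme \<Rightarrow> bool" where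
  "ET1 X \<longleftrightarrow>
     (\<forall>C\<in>ob X. \<forall>A\<in>ob X. is_abgroup_on (ext X C A) (ead X) (eng X) (ezr X C A)) \<and>
     (\<forall>A\<in>ob X. \<forall>A'\<in>ob X. \<forall>C\<in>ob X. \<forall>a\<in>hom X A A'. \<forall>d\<in>ext X C A. push X a d \<in> ext X C A') \<and>
     (\<forall>A\<in>ob X. \<forall>C\<in>ob X. \<forall>C'\<in>ob X. \<forall>c\<in>hom X C' C. \<forall>d\<in>ext X C A. pull X c d \<in> ext X C' A) \<and>
     (\<forall>A\<in>ob X. \<forall>C\<in>ob X. \<forall>d\<in>ext X C A. push X (ide X A) d = d \<and> pull X (ide X C) d = d) \<and>
     (\<forall>A\<in>ob X. \<forall>A'\<in>ob X. \<forall>A''\<in>ob X. \<forall>C\<in>ob X. \<forall>a\<in>hom X A A'. \<forall>a'\<in>hom X A' A''. \<forall>d\<in>ext X C A.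
        push X (cp X a' a) d = push X a' (push X a d)) \<and>
     (\<forall>A\<in>ob X. \<forall>C\<in>ob X. \<forall>C'\<in>ob X. \<forall>C''\<in>ob X. \<forall>c\<in>hom X C' C. \<forall>c'\<in>hom X C'' C'. \<forall>d\<in>ext X C A.
        pull X (cp X c c') d = pull X c' (pull X c d)) \<and>
     (\<forall>A\<in>ob X. \<forall>A'\<in>ob X. \<forall>C\<in>ob X. \<forall>C'\<in>ob X. \<forall>a\<in>hom X A A'. \<forall>c\<in>hom X C' C. \<forall>d\<in>ext X C A.
        push X a (pull X c d) = pull X c (push X a d)) \<and>
     (\<forall>A\<in>ob X. \<forall>A'\<in>ob X. \<forall>C\<in>ob X. \<forall>a\<in>hom X A A'. \<forall>a'\<in>hom X A A'. \<forall>d\<in>ext X C A. \<forall>d'\<in>ext X C A.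
        push X a (ead X d d') = ead X (push X a d) (push X a d') \<and>
        push X (ad X a a') d = ead X (push X a d) (push X a' d)) \<and>
     (\<forall>A\<in>ob X. \<forall>C\<in>ob X. \<forall>C'\<in>ob X. \<forall>c\<in>hom X C' C. \<forall>c'\<in>hom X C' C. \<forall>d\<in>ext X C A. \<forall>d'\<in>ext X C A.
        pull X c (ead X d d') = ead X (pull X c d) (pull X c d') \<and>
        pull X (ad X c c') d = ead X (pull X c d) (pull X c' d))"

definition seq_equiv :: "('o,'m,'e,'x) extri_scheme \<Rightarrow> 'o \<Rightarrow> 'm \<Rightarrow> 'm \<Rightarrow> 'o \<Rightarrow> 'm \<Rightarrow> 'm \<Rightarrow> bool" where
  "seq_equiv X B f g B' f' g' \<longleftrightarrow>
     (\<exists>b. is_iso X B B' b \<and> cp X b f = f' \<and> cp X g' b = g)"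

text \<open>s assigns to each extension an equivalence class of sequences.\<close>
definition is_realization_map :: "('o,'m,'e,'x) extri_scheme \<Rightarrow> bool" where
  "is_realization_map X \<longleftrightarrow>
     (\<forall>A B C f g d. rl X A B C f g d \<longrightarrow>
        A \<in> ob X \<and> B \<in> ob X \<and> C \<in> ob X \<and> f \<in> hom X A B \<and> g \<in> hom X B C \<and> d \<in> ext X C A) \<and>
     (\<forall>A\<in>ob X. \<forall>C\<in>ob X. \<forall>d\<in>ext X C A. \<exists>B f g. rl X A B C f g d) \<and>
     (\<forall>A B C f g B' f' g' d. rl X A B C f g d \<and> rl X A B' C f' g' d \<longrightarrow> seq_equiv X B f g B' f' g') \<and>
     (\<forall>A B C f g B' f' g' d. rl X A B C f g d \<and> B' \<in> ob X \<and> f' \<in> hom X A B' \<and> g' \<in> hom X B' C \<and>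
        seq_equiv X B f g B' f' g' \<longrightarrow> rl X A B' C f' g' d)"

definition ET2 :: "('o,'m,'e,'x) extri_scheme \<Rightarrow> bool" where
  "ET2 X \<longleftrightarrow> is_realization_map X \<and>
     (\<forall>A B C f g d A' B' C' f' g' d' a c.
        rl X A B C f g d \<and> rl X A' B' C' f' g' d' \<and> a \<in> hom X A A' \<and> c \<in> hom X C C' \<and>
        push X a d = pull X c d' \<longrightarrow>
        (\<exists>b\<in>hom X B B'. cp X b f = cp X f' a \<and> cp X g' b = cp X c g)) \<and>
     (\<forall>A\<in>ob X. \<forall>C\<in>ob X. \<forall>P i1 i2 p1 p2. biprod X A C P i1 i2 p1 p2 \<longrightarrow>
        rl X A P C i1 p2 (ezr X C A)) \<and>
     (\<forall>A B C f g d A' B' C' f' g' d'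
         PA iA1 iA2 pA1 pA2 PB iB1 iB2 pB1 pB2 PC iC1 iC2 pC1 pC2.
        rl X A B C f g d \<and> rl X A' B' C' f' g' d' \<and>
        biprod X A A' PA iA1 iA2 pA1 pA2 \<and> biprod X B B' PB iB1 iB2 pB1 pB2 \<and>
        biprod X C C' PC iC1 iC2 pC1 pC2 \<longrightarrow>
        rl X PA PB PC
           (ad X (cp X iB1 (cp X f pA1)) (cp X iB2 (cp X f' pA2)))
           (ad X (cp X iC1 (cp X g pB1)) (cp X iC2 (cp X g' pB2)))
           (ead X (push X iA1 (pull X pC1 d)) (push X iA2 (pull X pC2 d'))))"

definition ET3 :: "('o,'m,'e,'x) extri_scheme \<Rightarrow> bool" where
  "ET3 X \<longleftrightarrow>
     (\<forall>A B C x y d A' B' C' x' y' d' a b.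
        rl X A B C x y d \<and> rl X A' B' C' x' y' d' \<and> a \<in> hom X A A' \<and> b \<in> hom X B B' \<and>
        cp X b x = cp X x' a \<longrightarrow>
        (\<exists>c\<in>hom X C C'. cp X c y = cp X y' b \<and> push X a d = pull X c d'))"

definition ET3op :: "('o,'m,'e,'x) extri_scheme \<Rightarrow> bool" where
  "ET3op X \<longleftrightarrow>
     (\<forall>A B C x y d A' B' C' x' y' d' b c.
        rl X A B C x y d \<and> rl X A' B' C' x' y' d' \<and> b \<in> hom X B B' \<and> c \<in> hom X C C' \<and>
        cp X c y = cp X y' b \<longrightarrow>
        (\<exists>a\<in>hom X A A'. cp X b x = cp X x' a \<and> push X a d = pull X c d'))"

definition ET4 :: "('o,'m,'e,'x) extri_scheme \<Rightarrow> bool" where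
  "ET4 X \<longleftrightarrow>
     (\<forall>A B D f f' d C F g g' d'.
        rl X A B D f f' d \<and> rl X B C F g g' d' \<longrightarrow>
        (\<exists>E h' d'' dd e. E \<in> ob X \<and> h' \<in> hom X C E \<and> dd \<in> hom X D E \<and> e \<in> hom X E F \<and>
           rl X A C E (cp X g f) h' d'' \<and>
           rl X D E F dd e (push X f' d') \<and>
           cp X h' g = cp X dd f' \<and> cp X e h' = g' \<and>
           d = pull X dd d'' \<and> push X f d'' = pull X e d'))"

definition ET4op :: "('o,'m,'e,'x) extri_scheme \<Rightarrow> bool" where
  "ET4op X \<longleftrightarrow>
     (\<forall>D A B f' f d F C g' g d'.
        rl X D A B f' f d \<and> rl X F B C g' g d' \<longrightarrow>
        (\<exists>E h' d'' dd e. E \<in> ob X \<and> h' \<in> hom X E A \<and> dd \<in> hom X D E \<and> e \<in> hom X E F \<and>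
           rl X E A C h' (cp X g f) d'' \<and>
           rl X D E F dd e (pull X g' d) \<and>
           cp X h' dd = f' \<and> cp X f h' = cp X g' e \<and>
           d' = push X e d'' \<and> push X dd d = pull X g d''))"

definition extriangulated :: "('o,'m,'e,'x) extri_scheme \<Rightarrow> bool" where
  "extriangulated X \<longleftrightarrow> is_additive X \<and> ET1 X \<and> ET2 X \<and> ET3 X \<and> ET3op X \<and> ET4 X \<and> ET4op X"

section \<open>The category s-tri(C) and the ideal R_2\<close>

type_synonym ('o,'m,'e) stri = "'o \<times> 'o \<times> 'o \<times> 'm \<times> 'm \<times> 'e"

definition is_stri :: "('o,'m,'e,'x) extri_scheme \<Rightarrow> ('o,'m,'e) stri \<Rightarrow> bool" where
  "is_stri X T \<longleftrightarrow> (case T of (A,B,C,f,g,d) \<Rightarrow> rl X A B C f g d)"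

definition stri_mor :: "('o,'m,'e,'x) extri_scheme \<Rightarrow> ('o,'m,'e) stri \<Rightarrow> ('o,'m,'e) stri \<Rightarrow> 'm \<times> 'm \<times> 'm \<Rightarrow> bool" where
  "stri_mor X T T' p \<longleftrightarrow> is_stri X T \<and> is_stri X T' \<and>
     (case T of (X1,X2,X3,f1,f2,d) \<Rightarrow> case T' of (Y1,Y2,Y3,g1,g2,d') \<Rightarrow>
      case p of (p1,p2,p3) \<Rightarrow>
        p1 \<in> hom X X1 Y1 \<and> p2 \<in> hom X X2 Y2 \<and> p3 \<in> hom X X3 Y3 \<and>
        cp X p2 f1 = cp X g1 p1 \<and> cp X p3 f2 = cp X g2 p2 \<and>
        push X p1 d = pull X p3 d')"

definition stri_comp :: "('o,'m,'e,'x) extri_scheme \<Rightarrow> 'm \<times> 'm \<times> 'm \<Rightarrow> 'm \<times> 'm \<times> 'm \<Rightarrow> 'm \<times> 'm \<times> 'm" where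
  "stri_comp X q p = (case q of (q1,q2,q3) \<Rightarrow> case p of (p1,p2,p3) \<Rightarrow>
      (cp X q1 p1, cp X q2 p2, cp X q3 p3))"

definition stri_diff :: "('o,'m,'e,'x) extri_scheme \<Rightarrow> 'm \<times> 'm \<times> 'm \<Rightarrow> 'm \<times> 'm \<times> 'm \<Rightarrow> 'm \<times> 'm \<times> 'm" where
  "stri_diff X p q = (case p of (p1,p2,p3) \<Rightarrow> case q of (q1,q2,q3) \<Rightarrow>
      (ad X p1 (ng X q1), ad X p2 (ng X q2), ad X p3 (ng X q3)))"

definition stri_zero :: "('o,'m,'e,'x) extri_scheme \<Rightarrow> ('o,'m,'e) stri \<Rightarrow> ('o,'m,'e) stri \<Rightarrow> 'm \<times> 'm \<times> 'm" where
  "stri_zero X T T' = (case T of (X1,X2,X3,_) \<Rightarrow> case T' of (Y1,Y2,Y3,_) \<Rightarrow>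
      (zr X X1 Y1, zr X X2 Y2, zr X X3 Y3))"

definition R2 :: "('o,'m,'e,'x) extri_scheme \<Rightarrow> ('o,'m,'e) stri \<Rightarrow> ('o,'m,'e) stri \<Rightarrow> 'm \<times> 'm \<times> 'm \<Rightarrow> bool" where
  "R2 X T T' p \<longleftrightarrow> stri_mor X T T' p \<and>
     (case T of (X1,X2,X3,f1,f2,d) \<Rightarrow> case T' of (Y1,Y2,Y3,g1,g2,d') \<Rightarrow>
      case p of (p1,p2,p3) \<Rightarrow> (\<exists>v\<in>hom X X3 Y2. p3 = cp X g2 v))"

text \<open>Equality of classes in the quotient s-tri(C)/R_2: p and q (both T -> T') have the
  same image iff p - q lies in R_2(T,T').\<close>
definition quot_eq :: "('o,'m,'e,'x) extri_scheme \<Rightarrow> ('o,'m,'e) stri \<Rightarrow> ('o,'m,'e) stri \<Rightarrow> 'm \<times> 'm \<times> 'm \<Rightarrow> 'm \<times> 'm \<times> 'm \<Rightarrow> bool" where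
  "quot_eq X T T' p q \<longleftrightarrow> R2 X T T' (stri_diff X p q)"

definition quot_mono :: "('o,'m,'e,'x) extri_scheme \<Rightarrow> ('o,'m,'e) stri \<Rightarrow> ('o,'m,'e) stri \<Rightarrow> 'm \<times> 'm \<times> 'm \<Rightarrow> bool" where
  "quot_mono X T T' p \<longleftrightarrow>
     (\<forall>W q q'. is_stri X W \<and> stri_mor X W T q \<and> stri_mor X W T q' \<and>
        quot_eq X W T' (stri_comp X p q) (stri_comp X p q') \<longrightarrow> quot_eq X W T q q')"

end

theory Submission
  imports Defs
begin

(* A morphism a : A -> A' factors through the inflation f of an s-triangle A -f-> B -> C
   with extension d exactly when a_* d = 0; dually, c factors through the deflation g' of
   A' -> B' -g'-> C' with extension d' exactly when c^* d' = 0.  Since p1_* d = p3^* d' for a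
   morphism of s-triangles, this gives (1).

   By (1), the class of p is a monomorphism modulo R_2 iff for every morphism s into X_. such
   that p1 s1 factors through the inflation w1 of the source, s1 factors through w1 as well.
   Testing this on the realization of n^* d, where Y1 -> M -n-> X3 realizes p1_* d, yields
   x : Y1 -> X1 with (x p1)_* d = d, so 1 - x p1 = y f1 for some y, and y q1 + x q2 is a
   retraction of (f1; p1).  Conversely, y f1 + x p1 = 1 gives s1 = (y s2 + x u) w1 whenever
   p1 s1 = u w1. *)

lemma abgroup_on_idem_eq_zero:
  "is_abgroup_on S p n z \<Longrightarrow> x \<in> S \<Longrightarrow> p x x = x \<Longrightarrow> x = z"
  unfolding is_abgroup_on_def by metis

lemma abgroup_on_inverse_unique:
  "is_abgroup_on S p n z \<Longrightarrow> x \<in> S \<Longrightarrow> y \<in> S \<Longrightarrow> p x y = z \<Longrightarrow> y = n x"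
  unfolding is_abgroup_on_def by metis

lemma abgroup_on_eq_add_of_diff_eq:
  "is_abgroup_on S p n z \<Longrightarrow> a \<in> S \<Longrightarrow> b \<in> S \<Longrightarrow> p a (n b) = c \<Longrightarrow> a = p c b"
  unfolding is_abgroup_on_def by metis

locale extriangulated_category =
  fixes X :: "('o,'m,'e) extri"
  assumes extriangulated: "extriangulated X"
begin

lemma additive: "is_additive X"
  using extriangulated by (simp add: extriangulated_def)

lemma category: "is_category X"
  using additive by (simp add: is_additive_def)

lemma ide_in_hom [simp, intro]: "A \<in> ob X \<Longrightarrow> ide X A \<in> hom X A A"
  using category by (simp add: is_category_def)

lemma cp_in_hom [intro]:
  "A \<in> ob X \<Longrightarrow> B \<in> ob X \<Longrightarrow> D \<in> ob X \<Longrightarrow> f \<in> hom X A B \<Longrightarrow> g \<in> hom X B D \<Longrightarrow>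
   cp X g f \<in> hom X A D"
  using category unfolding is_category_def by blast

lemma cp_ide_right [simp]: "A \<in> ob X \<Longrightarrow> B \<in> ob X \<Longrightarrow> f \<in> hom X A B \<Longrightarrow> cp X f (ide X A) = f"
  using category unfolding is_category_def by blast

lemma cp_ide_left [simp]: "A \<in> ob X \<Longrightarrow> B \<in> ob X \<Longrightarrow> f \<in> hom X A B \<Longrightarrow> cp X (ide X B) f = f"
  using category unfolding is_category_def by blast

lemma cp_assoc:
  "A \<in> ob X \<Longrightarrow> B \<in> ob X \<Longrightarrow> D \<in> ob X \<Longrightarrow> E \<in> ob X \<Longrightarrow>
   f \<in> hom X A B \<Longrightarrow> g \<in> hom X B D \<Longrightarrow> h \<in> hom X D E \<Longrightarrow>
   cp X h (cp X g f) = cp X (cp X h g) f"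
  using category unfolding is_category_def by blast

lemma hom_abgroup: "A \<in> ob X \<Longrightarrow> B \<in> ob X \<Longrightarrow> is_abgroup_on (hom X A B) (ad X) (ng X) (zr X A B)"
  using additive unfolding is_additive_def by blast

lemma zr_in_hom [simp, intro]: "A \<in> ob X \<Longrightarrow> B \<in> ob X \<Longrightarrow> zr X A B \<in> hom X A B"
  using hom_abgroup unfolding is_abgroup_on_def by blast

lemma ad_in_hom [intro]:
  "A \<in> ob X \<Longrightarrow> B \<in> ob X \<Longrightarrow> f \<in> hom X A B \<Longrightarrow> g \<in> hom X A B \<Longrightarrow> ad X f g \<in> hom X A B"
  using hom_abgroup unfolding is_abgroup_on_def by blast

lemma ng_in_hom [intro]: "A \<in> ob X \<Longrightarrow> B \<in> ob X \<Longrightarrow> f \<in> hom X A B \<Longrightarrow> ng X f \<in> hom X A B"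
  using hom_abgroup unfolding is_abgroup_on_def by blast

lemma ad_zr_right [simp]: "A \<in> ob X \<Longrightarrow> B \<in> ob X \<Longrightarrow> f \<in> hom X A B \<Longrightarrow> ad X f (zr X A B) = f"
  using hom_abgroup unfolding is_abgroup_on_def by blast

lemma ad_zr_left [simp]: "A \<in> ob X \<Longrightarrow> B \<in> ob X \<Longrightarrow> f \<in> hom X A B \<Longrightarrow> ad X (zr X A B) f = f"
  using hom_abgroup unfolding is_abgroup_on_def by metis

lemma ng_zr [simp]: "A \<in> ob X \<Longrightarrow> B \<in> ob X \<Longrightarrow> ng X (zr X A B) = zr X A B"
  by (metis abgroup_on_inverse_unique ad_zr_right hom_abgroup zr_in_hom)

lemma ad_ng [simp]: "A \<in> ob X \<Longrightarrow> B \<in> ob X \<Longrightarrow> f \<in> hom X A B \<Longrightarrow> ad X f (ng X f) = zr X A B"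
  using hom_abgroup unfolding is_abgroup_on_def by blast

lemma cp_ad_right:
  "A \<in> ob X \<Longrightarrow> B \<in> ob X \<Longrightarrow> D \<in> ob X \<Longrightarrow> f \<in> hom X A B \<Longrightarrow> f' \<in> hom X A B \<Longrightarrow> g \<in> hom X B D \<Longrightarrow>
   cp X g (ad X f f') = ad X (cp X g f) (cp X g f')"
  using additive unfolding is_additive_def by blast

lemma cp_ad_left:
  "A \<in> ob X \<Longrightarrow> B \<in> ob X \<Longrightarrow> D \<in> ob X \<Longrightarrow> f \<in> hom X A B \<Longrightarrow> g \<in> hom X B D \<Longrightarrow> g' \<in> hom X B D \<Longrightarrow>
   cp X (ad X g g') f = ad X (cp X g f) (cp X g' f)"
  using additive unfolding is_additive_def by blast

lemma cp_zr_right [simp]: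
  assumes "A \<in> ob X" "B \<in> ob X" "D \<in> ob X" "g \<in> hom X B D"
  shows "cp X g (zr X A B) = zr X A D"
proof -
  have "ad X (cp X g (zr X A B)) (cp X g (zr X A B)) = cp X g (zr X A B)"
    using cp_ad_right[of A B D "zr X A B" "zr X A B" g] assms by simp
  then show ?thesis
    using abgroup_on_idem_eq_zero[OF hom_abgroup[of A D]] assms by blast
qed

lemma cp_zr_left [simp]:
  assumes "A \<in> ob X" "B \<in> ob X" "D \<in> ob X" "f \<in> hom X A B"
  shows "cp X (zr X B D) f = zr X A D"
proof -
  have "ad X (cp X (zr X B D) f) (cp X (zr X B D) f) = cp X (zr X B D) f"
    using cp_ad_left[of A B D f "zr X B D" "zr X B D"] assms by simp
  then show ?thesis
    using abgroup_on_idem_eq_zero[OF hom_abgroup[of A D]] assms by blast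
qed

lemma cp_ng_right:
  assumes "A \<in> ob X" "B \<in> ob X" "D \<in> ob X" "f \<in> hom X A B" "g \<in> hom X B D"
  shows "cp X g (ng X f) = ng X (cp X g f)"
proof -
  have "ad X (cp X g f) (cp X g (ng X f)) = zr X A D"
    using cp_ad_right[of A B D f "ng X f" g] assms by (simp add: ng_in_hom)
  then show ?thesis
    using abgroup_on_inverse_unique[OF hom_abgroup[of A D]] assms by blast
qed

lemma cp_ng_left:
  assumes "A \<in> ob X" "B \<in> ob X" "D \<in> ob X" "f \<in> hom X A B" "g \<in> hom X B D"
  shows "cp X (ng X g) f = ng X (cp X g f)"
proof -
  have "ad X (cp X g f) (cp X (ng X g) f) = zr X A D"
    using cp_ad_left[of A B D f g "ng X g"] assms by (simp add: ng_in_hom)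
  then show ?thesis
    using abgroup_on_inverse_unique[OF hom_abgroup[of A D]] assms by blast
qed

lemma zero_object_exists:
  "\<exists>Z\<in>ob X. \<forall>A\<in>ob X. hom X A Z = {zr X A Z} \<and> hom X Z A = {zr X Z A}"
  using additive unfolding is_additive_def by blast

lemma biprod_exists: "A \<in> ob X \<Longrightarrow> B \<in> ob X \<Longrightarrow> \<exists>P i1 i2 p1 p2. biprod X A B P i1 i2 p1 p2"
  using additive unfolding is_additive_def by blast

lemma biprodD:
  assumes "biprod X A B P i1 i2 p1 p2"
  shows "P \<in> ob X" "i1 \<in> hom X A P" "i2 \<in> hom X B P" "p1 \<in> hom X P A" "p2 \<in> hom X P B"
    "cp X p1 i1 = ide X A" "cp X p2 i2 = ide X B" "cp X p1 i2 = zr X B A" "cp X p2 i1 = zr X A B"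
    "ad X (cp X i1 p1) (cp X i2 p2) = ide X P"
  using assms by (simp_all add: biprod_def)

lemma biprod_section_iff:
  assumes bp: "biprod X A B P i1 i2 q1 q2"
    and ob: "A \<in> ob X" "B \<in> ob X" "Z \<in> ob X" and hom: "f \<in> hom X Z A" "g \<in> hom X Z B"
  shows "(\<exists>r\<in>hom X P Z. cp X r (ad X (cp X i1 f) (cp X i2 g)) = ide X Z)
     \<longleftrightarrow> (\<exists>y\<in>hom X A Z. \<exists>x\<in>hom X B Z. ad X (cp X y f) (cp X x g) = ide X Z)"
proof
  note b = biprodD[OF bp]
  have expand: "cp X r (ad X (cp X i1 f) (cp X i2 g)) = ad X (cp X (cp X r i1) f) (cp X (cp X r i2) g)"
    if r: "r \<in> hom X P Z" for r
    using cp_ad_right[of Z P Z "cp X i1 f" "cp X i2 g" r] cp_assoc[of Z A P Z f i1 r]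
      cp_assoc[of Z B P Z g i2 r] b ob hom r by auto
  show "\<exists>y\<in>hom X A Z. \<exists>x\<in>hom X B Z. ad X (cp X y f) (cp X x g) = ide X Z"
    if "\<exists>r\<in>hom X P Z. cp X r (ad X (cp X i1 f) (cp X i2 g)) = ide X Z"
    using that expand b ob cp_in_hom by metis
  assume "\<exists>y\<in>hom X A Z. \<exists>x\<in>hom X B Z. ad X (cp X y f) (cp X x g) = ide X Z"
  then obtain y x where y: "y \<in> hom X A Z" and x: "x \<in> hom X B Z"
    and yx: "ad X (cp X y f) (cp X x g) = ide X Z" by blast
  define r where "r = ad X (cp X y q1) (cp X x q2)"
  have r: "r \<in> hom X P Z" unfolding r_def using b x y ob by blast
  have "cp X r i1 = y" "cp X r i2 = x"
    unfolding r_def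
    using cp_ad_left[of A P Z i1 "cp X y q1" "cp X x q2"] cp_ad_left[of B P Z i2 "cp X y q1" "cp X x q2"]
      cp_assoc[of A P A Z i1 q1 y, symmetric] cp_assoc[of A P B Z i1 q2 x, symmetric]
      cp_assoc[of B P A Z i2 q1 y, symmetric] cp_assoc[of B P B Z i2 q2 x, symmetric]
      b x y ob cp_in_hom by auto
  then show "\<exists>r\<in>hom X P Z. cp X r (ad X (cp X i1 f) (cp X i2 g)) = ide X Z"
    using expand r yx by auto
qed

lemma ET1: "ET1 X"
  using extriangulated by (simp add: extriangulated_def)

lemma ext_abgroup: "C \<in> ob X \<Longrightarrow> A \<in> ob X \<Longrightarrow> is_abgroup_on (ext X C A) (ead X) (eng X) (ezr X C A)"
  using ET1 unfolding ET1_def by auto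

lemma ezr_in_ext [simp, intro]: "C \<in> ob X \<Longrightarrow> A \<in> ob X \<Longrightarrow> ezr X C A \<in> ext X C A"
  using ext_abgroup unfolding is_abgroup_on_def by blast

lemma push_in_ext [intro]:
  "A \<in> ob X \<Longrightarrow> A' \<in> ob X \<Longrightarrow> C \<in> ob X \<Longrightarrow> a \<in> hom X A A' \<Longrightarrow> d \<in> ext X C A \<Longrightarrow>
   push X a d \<in> ext X C A'"
  using ET1 unfolding ET1_def by auto

lemma pull_in_ext [intro]:
  "A \<in> ob X \<Longrightarrow> C \<in> ob X \<Longrightarrow> C' \<in> ob X \<Longrightarrow> c \<in> hom X C' C \<Longrightarrow> d \<in> ext X C A \<Longrightarrow>
   pull X c d \<in> ext X C' A"
  using ET1 unfolding ET1_def by auto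

lemma push_ide [simp]: "A \<in> ob X \<Longrightarrow> C \<in> ob X \<Longrightarrow> d \<in> ext X C A \<Longrightarrow> push X (ide X A) d = d"
  using ET1 unfolding ET1_def by auto

lemma pull_ide [simp]: "A \<in> ob X \<Longrightarrow> C \<in> ob X \<Longrightarrow> d \<in> ext X C A \<Longrightarrow> pull X (ide X C) d = d"
  using ET1 unfolding ET1_def by auto

lemma push_cp:
  "A \<in> ob X \<Longrightarrow> A' \<in> ob X \<Longrightarrow> A'' \<in> ob X \<Longrightarrow> C \<in> ob X \<Longrightarrow>
   a \<in> hom X A A' \<Longrightarrow> a' \<in> hom X A' A'' \<Longrightarrow> d \<in> ext X C A \<Longrightarrow>
   push X (cp X a' a) d = push X a' (push X a d)"
  using ET1 unfolding ET1_def by auto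

lemma pull_cp:
  "A \<in> ob X \<Longrightarrow> C \<in> ob X \<Longrightarrow> C' \<in> ob X \<Longrightarrow> C'' \<in> ob X \<Longrightarrow>
   c \<in> hom X C' C \<Longrightarrow> c' \<in> hom X C'' C' \<Longrightarrow> d \<in> ext X C A \<Longrightarrow>
   pull X (cp X c c') d = pull X c' (pull X c d)"
  using ET1 unfolding ET1_def by auto

lemma push_pull:
  "A \<in> ob X \<Longrightarrow> A' \<in> ob X \<Longrightarrow> C \<in> ob X \<Longrightarrow> C' \<in> ob X \<Longrightarrow>
   a \<in> hom X A A' \<Longrightarrow> c \<in> hom X C' C \<Longrightarrow> d \<in> ext X C A \<Longrightarrow>
   push X a (pull X c d) = pull X c (push X a d)"
  using ET1 unfolding ET1_def by auto

lemma push_ead: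
  "A \<in> ob X \<Longrightarrow> A' \<in> ob X \<Longrightarrow> C \<in> ob X \<Longrightarrow> a \<in> hom X A A' \<Longrightarrow> d \<in> ext X C A \<Longrightarrow> d' \<in> ext X C A \<Longrightarrow>
   push X a (ead X d d') = ead X (push X a d) (push X a d')"
  using ET1 unfolding ET1_def by auto

lemma push_ad:
  "A \<in> ob X \<Longrightarrow> A' \<in> ob X \<Longrightarrow> C \<in> ob X \<Longrightarrow> a \<in> hom X A A' \<Longrightarrow> a' \<in> hom X A A' \<Longrightarrow> d \<in> ext X C A \<Longrightarrow>
   push X (ad X a a') d = ead X (push X a d) (push X a' d)"
  using ET1 unfolding ET1_def by auto

lemma pull_ead:
  "A \<in> ob X \<Longrightarrow> C \<in> ob X \<Longrightarrow> C' \<in> ob X \<Longrightarrow> c \<in> hom X C' C \<Longrightarrow> d \<in> ext X C A \<Longrightarrow> d' \<in> ext X C A \<Longrightarrow>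
   pull X c (ead X d d') = ead X (pull X c d) (pull X c d')"
  using ET1 unfolding ET1_def by auto

lemma pull_ad:
  "A \<in> ob X \<Longrightarrow> C \<in> ob X \<Longrightarrow> C' \<in> ob X \<Longrightarrow> c \<in> hom X C' C \<Longrightarrow> c' \<in> hom X C' C \<Longrightarrow> d \<in> ext X C A \<Longrightarrow>
   pull X (ad X c c') d = ead X (pull X c d) (pull X c' d)"
  using ET1 unfolding ET1_def by auto

lemma push_ezr [simp]:
  assumes "A \<in> ob X" "A' \<in> ob X" "C \<in> ob X" "a \<in> hom X A A'"
  shows "push X a (ezr X C A) = ezr X C A'"
proof -
  have "ead X (ezr X C A) (ezr X C A) = ezr X C A"
    using ext_abgroup assms unfolding is_abgroup_on_def by blast
  then have "ead X (push X a (ezr X C A)) (push X a (ezr X C A)) = push X a (ezr X C A)"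
    using push_ead[of A A' C a "ezr X C A" "ezr X C A"] assms by simp
  then show ?thesis
    using abgroup_on_idem_eq_zero[OF ext_abgroup[of C A']] assms by blast
qed

lemma pull_ezr [simp]:
  assumes "A \<in> ob X" "C \<in> ob X" "C' \<in> ob X" "c \<in> hom X C' C"
  shows "pull X c (ezr X C A) = ezr X C' A"
proof -
  have "ead X (ezr X C A) (ezr X C A) = ezr X C A"
    using ext_abgroup assms unfolding is_abgroup_on_def by blast
  then have "ead X (pull X c (ezr X C A)) (pull X c (ezr X C A)) = pull X c (ezr X C A)"
    using pull_ead[of A C C' c "ezr X C A" "ezr X C A"] assms by simp
  then show ?thesis
    using abgroup_on_idem_eq_zero[OF ext_abgroup[of C' A]] assms by blast
qed

lemma push_zr [simp]:
  assumes "A \<in> ob X" "A' \<in> ob X" "C \<in> ob X" "d \<in> ext X C A"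
  shows "push X (zr X A A') d = ezr X C A'"
proof -
  have "ead X (push X (zr X A A') d) (push X (zr X A A') d) = push X (zr X A A') d"
    using push_ad[of A A' C "zr X A A'" "zr X A A'" d] assms by simp
  then show ?thesis
    using abgroup_on_idem_eq_zero[OF ext_abgroup[of C A']] assms by blast
qed

lemma pull_zr [simp]:
  assumes "A \<in> ob X" "C \<in> ob X" "C' \<in> ob X" "d \<in> ext X C A"
  shows "pull X (zr X C' C) d = ezr X C' A"
proof -
  have "ead X (pull X (zr X C' C) d) (pull X (zr X C' C) d) = pull X (zr X C' C) d"
    using pull_ad[of A C C' "zr X C' C" "zr X C' C" d] assms by simp
  then show ?thesis
    using abgroup_on_idem_eq_zero[OF ext_abgroup[of C' A]] assms by blast
qed

lemma push_ng:
  assumes "A \<in> ob X" "A' \<in> ob X" "C \<in> ob X" "a \<in> hom X A A'" "d \<in> ext X C A"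
  shows "push X (ng X a) d = eng X (push X a d)"
proof -
  have "ead X (push X a d) (push X (ng X a) d) = ezr X C A'"
    using push_ad[of A A' C a "ng X a" d, symmetric] assms by (simp add: ng_in_hom)
  then show ?thesis
    using abgroup_on_inverse_unique[OF ext_abgroup[of C A']] assms by blast
qed

lemma pull_ng:
  assumes "A \<in> ob X" "C \<in> ob X" "C' \<in> ob X" "c \<in> hom X C' C" "d \<in> ext X C A"
  shows "pull X (ng X c) d = eng X (pull X c d)"
proof -
  have "ead X (pull X c d) (pull X (ng X c) d) = ezr X C' A"
    using pull_ad[of A C C' c "ng X c" d, symmetric] assms by (simp add: ng_in_hom)
  then show ?thesis
    using abgroup_on_inverse_unique[OF ext_abgroup[of C' A]] assms by blast
qed

lemma ET2: "ET2 X"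
  using extriangulated by (simp add: extriangulated_def)

lemma realization_map: "is_realization_map X"
  using ET2 by (simp add: ET2_def)

lemma rl_wellformed:
  assumes "rl X A B C f g d"
  shows "A \<in> ob X" "B \<in> ob X" "C \<in> ob X" "f \<in> hom X A B" "g \<in> hom X B C" "d \<in> ext X C A"
proof -
  have "A \<in> ob X \<and> B \<in> ob X \<and> C \<in> ob X \<and> f \<in> hom X A B \<and> g \<in> hom X B C \<and> d \<in> ext X C A"
    using assms realization_map unfolding is_realization_map_def by (elim conjE) blast
  then show "A \<in> ob X" "B \<in> ob X" "C \<in> ob X" "f \<in> hom X A B" "g \<in> hom X B C" "d \<in> ext X C A"
    by simp_all
qed

lemma rl_exists: "A \<in> ob X \<Longrightarrow> C \<in> ob X \<Longrightarrow> d \<in> ext X C A \<Longrightarrow> \<exists>B f g. rl X A B C f g d"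
  using realization_map unfolding is_realization_map_def by (elim conjE) blast

lemma rl_morphism_exists:
  "rl X A B C f g d \<Longrightarrow> rl X A' B' C' f' g' d' \<Longrightarrow> a \<in> hom X A A' \<Longrightarrow> c \<in> hom X C C' \<Longrightarrow>
   push X a d = pull X c d' \<Longrightarrow> \<exists>b\<in>hom X B B'. cp X b f = cp X f' a \<and> cp X g' b = cp X c g"
  using ET2 unfolding ET2_def by (elim conjE) blast

lemma rl_biprod:
  "A \<in> ob X \<Longrightarrow> C \<in> ob X \<Longrightarrow> biprod X A C P i1 i2 p1 p2 \<Longrightarrow> rl X A P C i1 p2 (ezr X C A)"
  using ET2 unfolding ET2_def by simp

lemma ET3_exists:
  "rl X A B C x y d \<Longrightarrow> rl X A' B' C' x' y' d' \<Longrightarrow> a \<in> hom X A A' \<Longrightarrow> b \<in> hom X B B' \<Longrightarrow>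
   cp X b x = cp X x' a \<Longrightarrow> \<exists>c\<in>hom X C C'. cp X c y = cp X y' b \<and> push X a d = pull X c d'"
  using extriangulated unfolding extriangulated_def ET3_def by blast

lemma ET3op_exists:
  "rl X A B C x y d \<Longrightarrow> rl X A' B' C' x' y' d' \<Longrightarrow> b \<in> hom X B B' \<Longrightarrow> c \<in> hom X C C' \<Longrightarrow>
   cp X c y = cp X y' b \<Longrightarrow> \<exists>a\<in>hom X A A'. cp X b x = cp X x' a \<and> push X a d = pull X c d'"
  using extriangulated unfolding extriangulated_def ET3op_def by blast


section \<open>Factoring through inflations and deflations\<close>

lemma zero_object_triangles:
  obtains Z where "Z \<in> ob X"
    "\<And>B. B \<in> ob X \<Longrightarrow> rl X B B Z (ide X B) (zr X B Z) (ezr X Z B)"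
    "\<And>B. B \<in> ob X \<Longrightarrow> rl X Z B B (zr X Z B) (ide X B) (ezr X B Z)"
proof -
  obtain Z where Z: "Z \<in> ob X" "\<And>A. A \<in> ob X \<Longrightarrow> hom X A Z = {zr X A Z} \<and> hom X Z A = {zr X Z A}"
    using zero_object_exists by blast
  have ide_Z: "ide X Z = zr X Z Z"
    using Z ide_in_hom by blast
  have "biprod X B Z B (ide X B) (zr X Z B) (ide X B) (zr X B Z)"
    "biprod X Z B B (zr X Z B) (ide X B) (zr X B Z) (ide X B)" if "B \<in> ob X" for B
    unfolding biprod_def using that Z ide_Z by simp_all
  then show thesis
    using that Z rl_biprod by blast
qed

lemma push_inflation_eq_zero:
  assumes tri: "rl X A B C f g d"
  shows "push X f d = ezr X C B"
proof -
  note t = rl_wellformed[OF tri]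
  obtain Z where Z: "Z \<in> ob X" and split: "rl X B B Z (ide X B) (zr X B Z) (ezr X Z B)"
    using zero_object_triangles t by metis
  have "cp X (zr X C Z) g = cp X (zr X B Z) (ide X B)"
    using t Z by simp
  then obtain a where "a \<in> hom X A B" "cp X (ide X B) f = cp X (ide X B) a"
    and "push X a d = pull X (zr X C Z) (ezr X Z B)"
    using ET3op_exists[OF tri split] t Z by blast
  then show ?thesis
    using t Z by simp
qed

lemma pull_deflation_eq_zero:
  assumes tri: "rl X A B C f g d"
  shows "pull X g d = ezr X B A"
proof -
  note t = rl_wellformed[OF tri]
  obtain Z where Z: "Z \<in> ob X" and split: "rl X Z B B (zr X Z B) (ide X B) (ezr X B Z)"
    using zero_object_triangles t by metis
  have "cp X (ide X B) (zr X Z B) = cp X f (zr X Z A)"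
    using t Z by simp
  then obtain c where "c \<in> hom X B C" "cp X c (ide X B) = cp X g (ide X B)"
    and "push X (zr X Z A) (ezr X B Z) = pull X c d"
    using ET3_exists[OF split tri] t Z by blast
  then show ?thesis
    using t Z by simp
qed

lemma factors_through_inflation_iff:
  assumes tri: "rl X A B C f g d" and A': "A' \<in> ob X" and a: "a \<in> hom X A A'"
  shows "(\<exists>u\<in>hom X B A'. a = cp X u f) \<longleftrightarrow> push X a d = ezr X C A'"
proof
  note t = rl_wellformed[OF tri]
  show "push X a d = ezr X C A'" if factors: "\<exists>u\<in>hom X B A'. a = cp X u f"
  proof -
    obtain u where u: "u \<in> hom X B A'" "a = cp X u f"
      using factors by blast
    have "push X a d = push X u (push X f d)"
      using push_cp u t A' by blast
    then show ?thesis
      using push_inflation_eq_zero[OF tri] u t A' by simp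
  qed
  assume push_zero: "push X a d = ezr X C A'"
  obtain P i1 i2 q1 q2 where bp: "biprod X A' C P i1 i2 q1 q2"
    using biprod_exists A' t by blast
  note b = biprodD[OF bp]
  have split: "rl X A' P C i1 q2 (ezr X C A')"
    using rl_biprod bp A' t by blast
  have "push X a d = pull X (ide X C) (ezr X C A')"
    using push_zero A' t by simp
  then obtain b where b_hom: "b \<in> hom X B P" and b_f: "cp X b f = cp X i1 a"
    using rl_morphism_exists[OF tri split a] t by blast
  have "cp X (cp X q1 b) f = cp X q1 (cp X i1 a)"
    using cp_assoc[of A B P A' f b q1] b_f b b_hom t A' by simp
  also have "\<dots> = a"
    using cp_assoc[of A A' P A' a i1 q1] b a t A' by simp
  finally show "\<exists>u\<in>hom X B A'. a = cp X u f"
    using b b_hom t A' cp_in_hom by metis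
qed

lemma factors_through_deflation_iff:
  assumes tri: "rl X A B C f g d" and C': "C' \<in> ob X" and c: "c \<in> hom X C' C"
  shows "(\<exists>v\<in>hom X C' B. c = cp X g v) \<longleftrightarrow> pull X c d = ezr X C' A"
proof
  note t = rl_wellformed[OF tri]
  show "pull X c d = ezr X C' A" if factors: "\<exists>v\<in>hom X C' B. c = cp X g v"
  proof -
    obtain v where v: "v \<in> hom X C' B" "c = cp X g v"
      using factors by blast
    have "pull X c d = pull X v (pull X g d)"
      using pull_cp v t C' by blast
    then show ?thesis
      using pull_deflation_eq_zero[OF tri] v t C' by simp
  qed
  assume pull_zero: "pull X c d = ezr X C' A"
  obtain P i1 i2 q1 q2 where bp: "biprod X A C' P i1 i2 q1 q2"
    using biprod_exists C' t by blast
  note b = biprodD[OF bp]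
  have split: "rl X A P C' i1 q2 (ezr X C' A)"
    using rl_biprod bp C' t by blast
  have "push X (ide X A) (ezr X C' A) = pull X c d"
    using pull_zero C' t by simp
  then obtain b where b_hom: "b \<in> hom X P B" and g_b: "cp X g b = cp X c q2"
    using rl_morphism_exists[OF split tri _ c] t by blast
  have "cp X g (cp X b i2) = cp X c (cp X q2 i2)"
    using cp_assoc[of C' P B C i2 b g] cp_assoc[of C' P C' C i2 q2 c] g_b b b_hom c t C' by simp
  also have "\<dots> = c"
    using b c t C' by simp
  finally show "\<exists>v\<in>hom X C' B. c = cp X g v"
    using b b_hom t C' cp_in_hom by metis
qed

lemma push_eq_self_iff:
  assumes tri: "rl X A B C f g d" and t: "t \<in> hom X A A"
  shows "push X t d = d \<longleftrightarrow> (\<exists>y\<in>hom X B A. ad X (cp X y f) t = ide X A)"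
proof
  note w = rl_wellformed[OF tri]
  have td: "push X t d \<in> ext X C A"
    using push_in_ext t w by blast
  show "\<exists>y\<in>hom X B A. ad X (cp X y f) t = ide X A" if fixed: "push X t d = d"
  proof -
    have "push X (ad X (ide X A) (ng X t)) d = ead X d (eng X d)"
      using push_ad[of A A C "ide X A" "ng X t" d] push_ng[of A A C t d] fixed w t by (simp add: ng_in_hom)
    also have "\<dots> = ezr X C A"
      using ext_abgroup[of C A] w unfolding is_abgroup_on_def by blast
    finally obtain y where y: "y \<in> hom X B A" and "ad X (ide X A) (ng X t) = cp X y f"
      using factors_through_inflation_iff[OF tri, of A "ad X (ide X A) (ng X t)"] w t
      by (auto simp: ad_in_hom ng_in_hom)
    then have "ide X A = ad X (cp X y f) t"
      using abgroup_on_eq_add_of_diff_eq[OF hom_abgroup[of A A]] w t by blast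
    then show ?thesis
      using y by auto
  qed
  assume "\<exists>y\<in>hom X B A. ad X (cp X y f) t = ide X A"
  then obtain y where y: "y \<in> hom X B A" and yt: "ad X (cp X y f) t = ide X A"
    by blast
  have yf_hom: "cp X y f \<in> hom X A A"
    using y w cp_in_hom by blast
  have yf: "push X (cp X y f) d = ezr X C A"
    using factors_through_inflation_iff[OF tri w(1) yf_hom] y by blast
  have "d = push X (ad X (cp X y f) t) d"
    using yt w by simp
  also have "\<dots> = ead X (ezr X C A) (push X t d)"
    using push_ad[OF w(1) w(1) w(3) yf_hom t w(6)] yf by simp
  also have "\<dots> = push X t d"
    using ext_abgroup[of C A] td w unfolding is_abgroup_on_def by metis
  finally show "push X t d = d" ..
qed

section \<open>Morphisms of s-triangles modulo R_2\<close>

lemma stri_mor_comp: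
  assumes p: "stri_mor X (X1,X2,X3,f1,f2,d) (Y1,Y2,Y3,g1,g2,d') (p1,p2,p3)"
    and q: "stri_mor X (W1,W2,W3,w1,w2,e) (X1,X2,X3,f1,f2,d) (q1,q2,q3)"
  shows "stri_mor X (W1,W2,W3,w1,w2,e) (Y1,Y2,Y3,g1,g2,d') (cp X p1 q1, cp X p2 q2, cp X p3 q3)"
proof -
  have r: "rl X X1 X2 X3 f1 f2 d" and r': "rl X Y1 Y2 Y3 g1 g2 d'" and rw: "rl X W1 W2 W3 w1 w2 e"
    and h: "p1 \<in> hom X X1 Y1" "p2 \<in> hom X X2 Y2" "p3 \<in> hom X X3 Y3"
    and hq: "q1 \<in> hom X W1 X1" "q2 \<in> hom X W2 X2" "q3 \<in> hom X W3 X3"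
    and p_sq: "cp X p2 f1 = cp X g1 p1" "cp X p3 f2 = cp X g2 p2" "push X p1 d = pull X p3 d'"
    and q_sq: "cp X q2 w1 = cp X f1 q1" "cp X q3 w2 = cp X f2 q2" "push X q1 e = pull X q3 d"
    using p q by (simp_all add: stri_mor_def is_stri_def)
  note o = rl_wellformed[OF r] and o' = rl_wellformed[OF r'] and ow = rl_wellformed[OF rw]
  have "cp X (cp X p2 q2) w1 = cp X (cp X p2 f1) q1"
    using cp_assoc[of W1 W2 X2 Y2 w1 q2 p2] cp_assoc[of W1 X1 X2 Y2 q1 f1 p2] q_sq o o' ow h hq by simp
  also have "\<dots> = cp X g1 (cp X p1 q1)"
    using cp_assoc[of W1 X1 Y1 Y2 q1 p1 g1] p_sq o o' ow h hq by simp
  finally have sq1: "cp X (cp X p2 q2) w1 = cp X g1 (cp X p1 q1)" .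
  have "cp X (cp X p3 q3) w2 = cp X (cp X p3 f2) q2"
    using cp_assoc[of W2 W3 X3 Y3 w2 q3 p3] cp_assoc[of W2 X2 X3 Y3 q2 f2 p3] q_sq o o' ow h hq by simp
  also have "\<dots> = cp X g2 (cp X p2 q2)"
    using cp_assoc[of W2 X2 Y2 Y3 q2 p2 g2] p_sq o o' ow h hq by simp
  finally have sq2: "cp X (cp X p3 q3) w2 = cp X g2 (cp X p2 q2)" .
  have "push X (cp X p1 q1) e = push X p1 (pull X q3 d)"
    using push_cp[of W1 X1 Y1 W3 q1 p1 e] q_sq o o' ow h hq by simp
  also have "\<dots> = pull X q3 (pull X p3 d')"
    using push_pull[of X1 Y1 X3 W3 p1 q3 d] p_sq o o' ow h hq by simp
  also have "\<dots> = pull X (cp X p3 q3) d'"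
    using pull_cp[of Y1 Y3 X3 W3 p3 q3 d'] o o' ow h hq by simp
  finally have sq3: "push X (cp X p1 q1) e = pull X (cp X p3 q3) d'" .
  show ?thesis
    using sq1 sq2 sq3 rw r' o o' ow h hq cp_in_hom by (simp add: stri_mor_def is_stri_def)
qed

lemma stri_mor_diff:
  assumes q: "stri_mor X (W1,W2,W3,w1,w2,e) (X1,X2,X3,f1,f2,d) (a1,a2,a3)"
    and q': "stri_mor X (W1,W2,W3,w1,w2,e) (X1,X2,X3,f1,f2,d) (b1,b2,b3)"
  shows "stri_mor X (W1,W2,W3,w1,w2,e) (X1,X2,X3,f1,f2,d) (stri_diff X (a1,a2,a3) (b1,b2,b3))"
proof -
  have rw: "rl X W1 W2 W3 w1 w2 e" and r: "rl X X1 X2 X3 f1 f2 d"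
    and ha: "a1 \<in> hom X W1 X1" "a2 \<in> hom X W2 X2" "a3 \<in> hom X W3 X3"
    and hb: "b1 \<in> hom X W1 X1" "b2 \<in> hom X W2 X2" "b3 \<in> hom X W3 X3"
    and a_sq: "cp X a2 w1 = cp X f1 a1" "cp X a3 w2 = cp X f2 a2" "push X a1 e = pull X a3 d"
    and b_sq: "cp X b2 w1 = cp X f1 b1" "cp X b3 w2 = cp X f2 b2" "push X b1 e = pull X b3 d"
    using q q' by (simp_all add: stri_mor_def is_stri_def)
  note o = rl_wellformed[OF r] and ow = rl_wellformed[OF rw]
  have diff_sq: "cp X (ad X a' (ng X b')) w = cp X v (ad X a (ng X b))"
    if "U \<in> ob X" "U' \<in> ob X" "V \<in> ob X" "V' \<in> ob X" "w \<in> hom X U U'" "v \<in> hom X V V'"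
      "a \<in> hom X U V" "b \<in> hom X U V" "a' \<in> hom X U' V'" "b' \<in> hom X U' V'"
      "cp X a' w = cp X v a" "cp X b' w = cp X v b" for U U' V V' w v a b a' b'
    using that cp_ad_left[of U U' V' w a' "ng X b'"] cp_ad_right[of U V V' a "ng X b" v]
      cp_ng_left[of U U' V' w b'] cp_ng_right[of U V V' b v] by (simp add: ng_in_hom)
  have sq1: "cp X (ad X a2 (ng X b2)) w1 = cp X f1 (ad X a1 (ng X b1))"
    using diff_sq[of W1 W2 X1 X2 w1 f1 a1 b1 a2 b2] a_sq b_sq o ow ha hb by blast
  have sq2: "cp X (ad X a3 (ng X b3)) w2 = cp X f2 (ad X a2 (ng X b2))"
    using diff_sq[of W2 W3 X2 X3 w2 f2 a2 b2 a3 b3] a_sq b_sq o ow ha hb by blast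
  have "push X (ad X a1 (ng X b1)) e = ead X (pull X a3 d) (eng X (pull X b3 d))"
    using push_ad[of W1 X1 W3 a1 "ng X b1" e] push_ng[of W1 X1 W3 b1 e] a_sq b_sq o ow ha hb
    by (simp add: ng_in_hom)
  also have "\<dots> = pull X (ad X a3 (ng X b3)) d"
    using pull_ad[of X1 X3 W3 a3 "ng X b3" d] pull_ng[of X1 X3 W3 b3 d] o ow ha hb
    by (simp add: ng_in_hom)
  finally have sq3: "push X (ad X a1 (ng X b1)) e = pull X (ad X a3 (ng X b3)) d" .
  show ?thesis
    using sq1 sq2 sq3 rw r o ow ha hb
    by (simp add: stri_mor_def is_stri_def stri_diff_def ad_in_hom ng_in_hom)
qed

lemma stri_mor_zero:
  assumes "is_stri X (W1,W2,W3,w1,w2,e)" "is_stri X (X1,X2,X3,f1,f2,d)"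
  shows "stri_mor X (W1,W2,W3,w1,w2,e) (X1,X2,X3,f1,f2,d) (stri_zero X (W1,W2,W3,w1,w2,e) (X1,X2,X3,f1,f2,d))"
proof -
  have rw: "rl X W1 W2 W3 w1 w2 e" and r: "rl X X1 X2 X3 f1 f2 d"
    using assms by (simp_all add: is_stri_def)
  show ?thesis
    using assms rl_wellformed[OF rw] rl_wellformed[OF r] by (simp add: stri_zero_def stri_mor_def)
qed

lemma stri_mor_inflation_factors_iff_deflation_factors:
  assumes "stri_mor X (A,B,C,f,g,d) (A',B',C',f',g',d') (a,b,c)"
  shows "(\<exists>u\<in>hom X B A'. a = cp X u f) \<longleftrightarrow> (\<exists>v\<in>hom X C B'. c = cp X g' v)"
proof -
  have r: "rl X A B C f g d" and r': "rl X A' B' C' f' g' d'"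
    and a: "a \<in> hom X A A'" and c: "c \<in> hom X C C'" and compat: "push X a d = pull X c d'"
    using assms by (simp_all add: stri_mor_def is_stri_def)
  note o = rl_wellformed[OF r] and o' = rl_wellformed[OF r']
  have "(\<exists>u\<in>hom X B A'. a = cp X u f) \<longleftrightarrow> push X a d = ezr X C A'"
    using factors_through_inflation_iff[OF r o'(1) a] .
  also have "\<dots> \<longleftrightarrow> (\<exists>v\<in>hom X C B'. c = cp X g' v)"
    using factors_through_deflation_iff[OF r' o(3) c] compat by simp
  finally show ?thesis .
qed

lemma R2_iff_inflation_factors:
  assumes "stri_mor X (A,B,C,f,g,d) (A',B',C',f',g',d') (a,b,c)"
  shows "R2 X (A,B,C,f,g,d) (A',B',C',f',g',d') (a,b,c) \<longleftrightarrow> (\<exists>u\<in>hom X B A'. a = cp X u f)"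
  using assms stri_mor_inflation_factors_iff_deflation_factors[OF assms] by (simp add: R2_def)

lemma stri_diff_zero:
  assumes "stri_mor X (W1,W2,W3,w1,w2,e) (X1,X2,X3,f1,f2,d) (a1,a2,a3)"
  shows "stri_diff X (a1,a2,a3) (stri_zero X (W1,W2,W3,w1,w2,e) (X1,X2,X3,f1,f2,d)) = (a1,a2,a3)"
proof -
  have "rl X W1 W2 W3 w1 w2 e" "rl X X1 X2 X3 f1 f2 d"
    using assms by (simp_all add: stri_mor_def is_stri_def)
  then show ?thesis
    using assms rl_wellformed by (simp add: stri_mor_def stri_diff_def stri_zero_def)
qed

lemma stri_comp_zero:
  assumes "stri_mor X (X1,X2,X3,f1,f2,d) (Y1,Y2,Y3,g1,g2,d') (p1,p2,p3)" "is_stri X (W1,W2,W3,w1,w2,e)"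
  shows "stri_comp X (p1,p2,p3) (stri_zero X (W1,W2,W3,w1,w2,e) (X1,X2,X3,f1,f2,d))
    = stri_zero X (W1,W2,W3,w1,w2,e) (Y1,Y2,Y3,g1,g2,d')"
proof -
  have "rl X W1 W2 W3 w1 w2 e" "rl X X1 X2 X3 f1 f2 d" "rl X Y1 Y2 Y3 g1 g2 d'"
    using assms by (simp_all add: stri_mor_def is_stri_def)
  then show ?thesis
    using assms rl_wellformed by (simp add: stri_mor_def stri_comp_def stri_zero_def)
qed

lemma stri_comp_diff:
  assumes p: "stri_mor X (X1,X2,X3,f1,f2,d) (Y1,Y2,Y3,g1,g2,d') (p1,p2,p3)"
    and q: "stri_mor X (W1,W2,W3,w1,w2,e) (X1,X2,X3,f1,f2,d) (a1,a2,a3)"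
    and q': "stri_mor X (W1,W2,W3,w1,w2,e) (X1,X2,X3,f1,f2,d) (b1,b2,b3)"
  shows "stri_comp X (p1,p2,p3) (stri_diff X (a1,a2,a3) (b1,b2,b3))
    = stri_diff X (stri_comp X (p1,p2,p3) (a1,a2,a3)) (stri_comp X (p1,p2,p3) (b1,b2,b3))"
proof -
  have distrib: "cp X p (ad X a (ng X b)) = ad X (cp X p a) (ng X (cp X p b))"
    if "U \<in> ob X" "V \<in> ob X" "V' \<in> ob X" "p \<in> hom X V V'" "a \<in> hom X U V" "b \<in> hom X U V"
    for U V V' p a b
    using that cp_ad_right[of U V V' a "ng X b" p] cp_ng_right[of U V V' b p] by (simp add: ng_in_hom)
  have rw: "rl X W1 W2 W3 w1 w2 e" and r: "rl X X1 X2 X3 f1 f2 d" and r': "rl X Y1 Y2 Y3 g1 g2 d'"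
    and h: "p1 \<in> hom X X1 Y1" "p2 \<in> hom X X2 Y2" "p3 \<in> hom X X3 Y3"
    and ha: "a1 \<in> hom X W1 X1" "a2 \<in> hom X W2 X2" "a3 \<in> hom X W3 X3"
    and hb: "b1 \<in> hom X W1 X1" "b2 \<in> hom X W2 X2" "b3 \<in> hom X W3 X3"
    using p q q' by (simp_all add: stri_mor_def is_stri_def)
  note o = rl_wellformed[OF r] and o' = rl_wellformed[OF r'] and ow = rl_wellformed[OF rw]
  have "cp X p1 (ad X a1 (ng X b1)) = ad X (cp X p1 a1) (ng X (cp X p1 b1))"
    "cp X p2 (ad X a2 (ng X b2)) = ad X (cp X p2 a2) (ng X (cp X p2 b2))"
    "cp X p3 (ad X a3 (ng X b3)) = ad X (cp X p3 a3) (ng X (cp X p3 b3))"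
    using distrib[of W1 X1 Y1 p1 a1 b1] distrib[of W2 X2 Y2 p2 a2 b2] distrib[of W3 X3 Y3 p3 a3 b3]
      o o' ow h ha hb by simp_all
  then show ?thesis
    by (simp add: stri_comp_def stri_diff_def)
qed

lemma quot_mono_iff_inflation_factorization:
  assumes p: "stri_mor X (X1,X2,X3,f1,f2,d) (Y1,Y2,Y3,g1,g2,d') (p1,p2,p3)"
  shows "quot_mono X (X1,X2,X3,f1,f2,d) (Y1,Y2,Y3,g1,g2,d') (p1,p2,p3) \<longleftrightarrow>
    (\<forall>W1 W2 W3 w1 w2 e s1 s2 s3. stri_mor X (W1,W2,W3,w1,w2,e) (X1,X2,X3,f1,f2,d) (s1,s2,s3) \<and>
       (\<exists>u\<in>hom X W2 Y1. cp X p1 s1 = cp X u w1) \<longrightarrow> (\<exists>t\<in>hom X W2 X1. s1 = cp X t w1))"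
    (is "_ \<longleftrightarrow> (\<forall>W1 W2 W3 w1 w2 e s1 s2 s3. ?kernel W1 W2 W3 w1 w2 e s1 s2 s3)")
proof
  let ?T = "(X1,X2,X3,f1,f2,d)" and ?T' = "(Y1,Y2,Y3,g1,g2,d')"
  assume mono: "quot_mono X ?T ?T' (p1,p2,p3)"
  show "\<forall>W1 W2 W3 w1 w2 e s1 s2 s3. ?kernel W1 W2 W3 w1 w2 e s1 s2 s3"
  proof (intro allI impI, elim conjE)
    fix W1 W2 W3 :: 'o and w1 w2 s1 s2 s3 :: 'm and e :: 'e
    let ?W = "(W1,W2,W3,w1,w2,e)" and ?s = "(s1,s2,s3)"
    assume s: "stri_mor X ?W ?T ?s" and "\<exists>u\<in>hom X W2 Y1. cp X p1 s1 = cp X u w1"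
    moreover have ps: "stri_mor X ?W ?T' (stri_comp X (p1,p2,p3) ?s)"
      using stri_mor_comp[OF p s] by (simp add: stri_comp_def)
    ultimately have "R2 X ?W ?T' (stri_comp X (p1,p2,p3) ?s)"
      using R2_iff_inflation_factors by (simp add: stri_comp_def)
    moreover have W: "is_stri X ?W" and "is_stri X ?T"
      using s by (simp_all add: stri_mor_def)
    ultimately have "quot_eq X ?W ?T' (stri_comp X (p1,p2,p3) ?s) (stri_comp X (p1,p2,p3) (stri_zero X ?W ?T))"
      using stri_comp_zero[OF p W] stri_diff_zero ps by (simp add: quot_eq_def stri_comp_def)
    then have "quot_eq X ?W ?T ?s (stri_zero X ?W ?T)"
      using mono s W stri_mor_zero \<open>is_stri X ?T\<close> unfolding quot_mono_def by blast
    then show "\<exists>t\<in>hom X W2 X1. s1 = cp X t w1"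
      using R2_iff_inflation_factors[OF s] stri_diff_zero[OF s] by (simp add: quot_eq_def)
  qed
next
  let ?T = "(X1,X2,X3,f1,f2,d)" and ?T' = "(Y1,Y2,Y3,g1,g2,d')"
  assume kernel: "\<forall>W1 W2 W3 w1 w2 e s1 s2 s3. ?kernel W1 W2 W3 w1 w2 e s1 s2 s3"
  show "quot_mono X ?T ?T' (p1,p2,p3)"
    unfolding quot_mono_def
  proof (intro allI impI, elim conjE)
    fix W q q'
    assume q: "stri_mor X W ?T q" and q': "stri_mor X W ?T q'"
      and eq: "quot_eq X W ?T' (stri_comp X (p1,p2,p3) q) (stri_comp X (p1,p2,p3) q')"
    obtain W1 W2 W3 w1 w2 e where W: "W = (W1,W2,W3,w1,w2,e)"
      by (cases W) auto
    obtain a1 a2 a3 b1 b2 b3 where qs: "q = (a1,a2,a3)" "q' = (b1,b2,b3)"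
      by (cases q, cases q') auto
    obtain s1 s2 s3 where s_def: "stri_diff X q q' = (s1,s2,s3)"
      by (cases "stri_diff X q q'") auto
    have s: "stri_mor X W ?T (s1,s2,s3)"
      using stri_mor_diff q q' W qs s_def by metis
    have "R2 X W ?T' (stri_comp X (p1,p2,p3) (s1,s2,s3))"
      using eq stri_comp_diff[OF p] q q' W qs s_def unfolding quot_eq_def by metis
    then have "\<exists>u\<in>hom X W2 Y1. cp X p1 s1 = cp X u w1"
      using R2_iff_inflation_factors stri_mor_comp[OF p] s W by (simp add: stri_comp_def)
    then have "\<exists>t\<in>hom X W2 X1. s1 = cp X t w1"
      using kernel s W by blast
    then show "quot_eq X W ?T q q'"
      using R2_iff_inflation_factors s W s_def by (simp add: quot_eq_def)
  qed
qed

lemma quot_mono_imp_push_retraction: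
  assumes p: "stri_mor X (X1,X2,X3,f1,f2,d) (Y1,Y2,Y3,g1,g2,d') (p1,p2,p3)"
    and mono: "quot_mono X (X1,X2,X3,f1,f2,d) (Y1,Y2,Y3,g1,g2,d') (p1,p2,p3)"
  shows "\<exists>x\<in>hom X Y1 X1. push X (cp X x p1) d = d"
proof -
  have r: "rl X X1 X2 X3 f1 f2 d" and r': "rl X Y1 Y2 Y3 g1 g2 d'" and p1: "p1 \<in> hom X X1 Y1"
    using p by (simp_all add: stri_mor_def is_stri_def)
  note o = rl_wellformed[OF r] and o' = rl_wellformed[OF r']
  define \<epsilon> where "\<epsilon> = push X p1 d"
  have "\<epsilon> \<in> ext X X3 Y1"
    unfolding \<epsilon>_def using o o' p1 by blast
  then obtain M m n where rM: "rl X Y1 M X3 m n \<epsilon>"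
    using rl_exists o o' by blast
  note oM = rl_wellformed[OF rM]
  have nd: "pull X n d \<in> ext X M X1"
    using o oM by blast
  then obtain W2 w1 w2 where rW: "rl X X1 W2 M w1 w2 (pull X n d)"
    using rl_exists o oM by blast
  note oW = rl_wellformed[OF rW]
  have "push X (ide X X1) (pull X n d) = pull X n d"
    using o oM nd by simp
  then obtain s2 where "s2 \<in> hom X W2 X2" "cp X s2 w1 = cp X f1 (ide X X1)" "cp X f2 s2 = cp X n w2"
    using rl_morphism_exists[OF rW r _ oM(5)] o by blast
  then have s: "stri_mor X (X1,W2,M,w1,w2,pull X n d) (X1,X2,X3,f1,f2,d) (ide X X1, s2, n)"
    using rW r o oM nd by (simp add: stri_mor_def is_stri_def)
  have "push X p1 (pull X n d) = pull X n \<epsilon>"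
    unfolding \<epsilon>_def using push_pull o o' oM p1 by blast
  also have "\<dots> = ezr X M Y1"
    using pull_deflation_eq_zero[OF rM] .
  finally have "\<exists>u\<in>hom X W2 Y1. cp X p1 (ide X X1) = cp X u w1"
    using factors_through_inflation_iff[OF rW o'(1) p1] o o' p1 by simp
  then have "\<exists>t\<in>hom X W2 X1. ide X X1 = cp X t w1"
    using mono s quot_mono_iff_inflation_factorization[OF p] by blast
  then obtain v where v: "v \<in> hom X M X2" "n = cp X f2 v"
    using stri_mor_inflation_factors_iff_deflation_factors[OF s] by blast
  then have "cp X (ide X X3) n = cp X f2 v"
    using o oM by simp
  then obtain x where x: "x \<in> hom X Y1 X1" "push X x \<epsilon> = pull X (ide X X3) d"
    using ET3op_exists[OF rM r v(1)] o by blast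
  have "push X (cp X x p1) d = d"
    using push_cp[of X1 Y1 X1 X3 p1 x d] x o o' p1 unfolding \<epsilon>_def by simp
  then show ?thesis
    using x by blast
qed

lemma push_retraction_imp_quot_mono:
  assumes p: "stri_mor X (X1,X2,X3,f1,f2,d) (Y1,Y2,Y3,g1,g2,d') (p1,p2,p3)"
    and x: "x \<in> hom X Y1 X1" and retraction: "push X (cp X x p1) d = d"
  shows "quot_mono X (X1,X2,X3,f1,f2,d) (Y1,Y2,Y3,g1,g2,d') (p1,p2,p3)"
  unfolding quot_mono_iff_inflation_factorization[OF p]
proof (intro allI impI, elim conjE bexE)
  fix W1 W2 W3 :: 'o and w1 w2 s1 s2 s3 u :: 'm and e :: 'e
  assume s: "stri_mor X (W1,W2,W3,w1,w2,e) (X1,X2,X3,f1,f2,d) (s1,s2,s3)"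
    and u: "u \<in> hom X W2 Y1" and p1_s1: "cp X p1 s1 = cp X u w1"
  have r: "rl X X1 X2 X3 f1 f2 d" and r': "rl X Y1 Y2 Y3 g1 g2 d'" and p1: "p1 \<in> hom X X1 Y1"
    using p by (simp_all add: stri_mor_def is_stri_def)
  have rw: "rl X W1 W2 W3 w1 w2 e" and s1: "s1 \<in> hom X W1 X1" and s2: "s2 \<in> hom X W2 X2"
    and s2_w1: "cp X s2 w1 = cp X f1 s1"
    using s by (simp_all add: stri_mor_def is_stri_def)
  note o = rl_wellformed[OF r] and o' = rl_wellformed[OF r'] and ow = rl_wellformed[OF rw]
  have xp1: "cp X x p1 \<in> hom X X1 X1"
    using x p1 o o' cp_in_hom by blast
  obtain y where y: "y \<in> hom X X2 X1" and yx: "ad X (cp X y f1) (cp X x p1) = ide X X1"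
    using push_eq_self_iff[OF r xp1] retraction by blast
  have ys2: "cp X y s2 \<in> hom X W2 X1" and xu: "cp X x u \<in> hom X W2 X1"
    using x y s2 u o o' ow cp_in_hom by blast+
  have "s1 = cp X (ad X (cp X y f1) (cp X x p1)) s1"
    using yx s1 o ow by simp
  also have "\<dots> = ad X (cp X (cp X y f1) s1) (cp X (cp X x p1) s1)"
    using cp_ad_left[of W1 X1 X1 s1 "cp X y f1" "cp X x p1"] x y s1 p1 o o' ow cp_in_hom by blast
  also have "\<dots> = ad X (cp X y (cp X s2 w1)) (cp X x (cp X u w1))"
    using cp_assoc[of W1 X1 X2 X1 s1 f1 y] cp_assoc[of W1 X1 Y1 X1 s1 p1 x] s2_w1 p1_s1
      x y s1 p1 o o' ow by simp
  also have "\<dots> = ad X (cp X (cp X y s2) w1) (cp X (cp X x u) w1)"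
    using cp_assoc[of W1 W2 X2 X1 w1 s2 y] cp_assoc[of W1 W2 Y1 X1 w1 u x] x y s2 u o o' ow by simp
  also have "\<dots> = cp X (ad X (cp X y s2) (cp X x u)) w1"
    using cp_ad_left[of W1 W2 X1 w1 "cp X y s2" "cp X x u"] ys2 xu o ow by simp
  finally show "\<exists>t\<in>hom X W2 X1. s1 = cp X t w1"
    using ys2 xu o ow by blast
qed

end

theorem lemma4p2:
  fixes X :: "('o,'m,'e) extri"
    and X1 X2 X3 Y1 Y2 Y3 P :: 'o
    and f1 f2 g1 g2 p1 p2 p3 i1 i2 q1 q2 :: 'm
    and d d' :: 'e
  assumes "extriangulated X"
    and mor: "stri_mor X (X1,X2,X3,f1,f2,d) (Y1,Y2,Y3,g1,g2,d') (p1,p2,p3)"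
    and bp: "biprod X X2 Y1 P i1 i2 q1 q2"
  shows "(quot_eq X (X1,X2,X3,f1,f2,d) (Y1,Y2,Y3,g1,g2,d') (p1,p2,p3)
              (stri_zero X (X1,X2,X3,f1,f2,d) (Y1,Y2,Y3,g1,g2,d'))
            \<longleftrightarrow> (\<exists>u\<in>hom X X2 Y1. p1 = cp X u f1))
       \<and> ((\<exists>u\<in>hom X X2 Y1. p1 = cp X u f1) \<longleftrightarrow> (\<exists>v\<in>hom X X3 Y2. p3 = cp X g2 v))
       \<and> (quot_mono X (X1,X2,X3,f1,f2,d) (Y1,Y2,Y3,g1,g2,d') (p1,p2,p3)
            \<longleftrightarrow> (\<exists>r\<in>hom X P X1. cp X r (ad X (cp X i1 f1) (cp X i2 p1)) = ide X X1))"
proof -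
  interpret extriangulated_category X
    by unfold_locales (rule assms(1))
  have r: "rl X X1 X2 X3 f1 f2 d" and r': "rl X Y1 Y2 Y3 g1 g2 d'" and p1: "p1 \<in> hom X X1 Y1"
    using mor by (simp_all add: stri_mor_def is_stri_def)
  note o = rl_wellformed[OF r] and o' = rl_wellformed[OF r']
  have zero_iff: "quot_eq X (X1,X2,X3,f1,f2,d) (Y1,Y2,Y3,g1,g2,d') (p1,p2,p3)
      (stri_zero X (X1,X2,X3,f1,f2,d) (Y1,Y2,Y3,g1,g2,d')) \<longleftrightarrow> (\<exists>u\<in>hom X X2 Y1. p1 = cp X u f1)"
    using R2_iff_inflation_factors[OF mor] stri_diff_zero[OF mor] by (simp add: quot_eq_def)
  have "quot_mono X (X1,X2,X3,f1,f2,d) (Y1,Y2,Y3,g1,g2,d') (p1,p2,p3)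
      \<longleftrightarrow> (\<exists>x\<in>hom X Y1 X1. push X (cp X x p1) d = d)"
    using quot_mono_imp_push_retraction[OF mor] push_retraction_imp_quot_mono[OF mor] by blast
  also have "\<dots> \<longleftrightarrow> (\<exists>y\<in>hom X X2 X1. \<exists>x\<in>hom X Y1 X1. ad X (cp X y f1) (cp X x p1) = ide X X1)"
    using push_eq_self_iff[OF r] cp_in_hom[OF o(1) o'(1) o(1) p1] by blast
  also have "\<dots> \<longleftrightarrow> (\<exists>r\<in>hom X P X1. cp X r (ad X (cp X i1 f1) (cp X i2 p1)) = ide X X1)"
    using biprod_section_iff[OF bp o(2) o'(1) o(1) o(4) p1] by blast
  finally have mono_iff: "quot_mono X (X1,X2,X3,f1,f2,d) (Y1,Y2,Y3,g1,g2,d') (p1,p2,p3)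
      \<longleftrightarrow> (\<exists>r\<in>hom X P X1. cp X r (ad X (cp X i1 f1) (cp X i2 p1)) = ide X X1)" .
  show ?thesis
    using zero_iff stri_mor_inflation_factors_iff_deflation_factors[OF mor] mono_iff by blast
qed

end
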